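(* Suppose $\mathcal X_1,\dots,\mathcal X_n$ satisfy Condition (RIP) with $\delta\in(0,1/3)$. Fix $l\in\{1,\dots,L\}$ and let $\hat{\mathcal A}=\bigotimes_{k=L}^{l+1}\hat{\mathcal A}_k$, $\mathcal A=\bigotimes_{k=L}^{l+1}\mathcal A_k$ and $\hat{\mathcal G}=\bigotimes_{k=l-1}^{1}\hat{\mathcal G}_k$ with all factors in $\mathbb R^{d_k\times p_k\times q_k}$ and $\|\hat{\mathcal A}\|_F=\|\mathcal A\|_F=\|\hat{\mathcal G}\|_F=1$ (for $l=L$, resp. $l=1$, the corresponding product is the array $1$). Let $\hat{\mathbf x}_i=\mathrm{vec}(\tilde{\mathcal X}_i^{(l)}(\hat{\mathcal A},\hat{\mathcal G}))$, $\mathbf x_i=\mathrm{vec}(\tilde{\mathcal X}_i^{(l)}(\mathcal A,\hat{\mathcal G}))$, $\hat{\boldsymbol\Sigma}=\frac1n\sum_i\hat{\mathbf x}_i\hat{\mathbf x}_i^\top$ and $\boldsymbol\Sigma=\frac1n\sum_i\hat{\mathbf x}_i\mathbf x_i^\top$. Then $\hat{\boldsymbol\Sigma}$ is invertible and $$\big\|\hat{\boldsymbol\Sigma}^{-1}\big(\langle\hat{\mathcal A},\mathcal A\rangle\hat{\boldsymbol\Sigma}-\boldsymbol\Sigma\big)\big\|_2\le\frac{3\delta}{1-3\delta}\,\mathrm{dist}(\hat{\mathcal A},\mathcal A),$$ where $\|\cdot\|_2$ is the spectral norm.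
   Context: Arrays are real 3-way arrays; $\langle\cdot,\cdot\rangle$ and $\|\cdot\|_F$ are the entrywise inner product and norm. For $\mathcal A\in\mathbb R^{a_1\times a_2\times a_3}$, $\mathcal B\in\mathbb R^{b_1\times b_2\times b_3}$ the Kronecker product $\mathcal A\otimes\mathcal B\in\mathbb R^{a_1b_1\times a_2b_2\times a_3b_3}$ has entries $(\mathcal A\otimes\mathcal B)_{(h_1-1)b_1+h_2,\,(j_1-1)b_2+j_2,\,(k_1-1)b_3+k_2}=\mathcal A_{h_1j_1k_1}\mathcal B_{h_2j_2k_2}$; it is associative, $\bigotimes_{l=L}^1\mathcal B_l:=\mathcal B_L\otimes\cdots\otimes\mathcal B_1$, and the $1\times1\times1$ array $1$ is neutral. Fix $L\ge2$, positive integers $d_l,p_l,q_l$, $d=\prod_ld_l$, $p=\prod_lp_l$, $q=\prod_lq_l$; vec is a fixed vectorization. For nonzero arrays of the same shape, $\mathrm{dist}(\mathcal U,\mathcal V)=\big(1-\langle\mathcal U,\mathcal V\rangle^2/(\|\mathcal U\|_F^2\|\mathcal V\|_F^2)\big)^{1/2}$. Condition (RIP) with constant $\delta\in(0,1)$: for all arrays $\mathcal B_l^r\in\mathbb R^{d_l\times p_l\times q_l}$ ($l=1,\dots,L$, $r=1,2$), with $\mathcal S=\sum_{r=1}^2\bigotimes_{l=L}^1\mathcal B_l^r$, $(1-\delta)\|\mathcal S\|_F^2\le\frac1n\sum_{i=1}^n\langle\mathcal X_i,\mathcal S\rangle^2\le(1+\delta)\|\mathcal S\|_F^2$. For $l\in\{1,\dots,L\}$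 let $D_l^+=\prod_{k=l+1}^Ld_k$, $D_l^-=\prod_{k=1}^{l-1}d_k$, similarly $P_l^\pm,Q_l^\pm$ (empty products are 1); for $\mathcal A\in\mathbb R^{D_l^+\times P_l^+\times Q_l^+}$, $\mathcal G\in\mathbb R^{D_l^-\times P_l^-\times Q_l^-}$, $\tilde{\mathcal X}_i^{(l)}(\mathcal A,\mathcal G)\in\mathbb R^{d_l\times p_l\times q_l}$ is the unique array with $\langle\tilde{\mathcal X}_i^{(l)}(\mathcal A,\mathcal G),\mathcal B\rangle=\langle\mathcal X_i,\mathcal A\otimes\mathcal B\otimes\mathcal G\rangle$ for all $\mathcal B\in\mathbb R^{d_l\times p_l\times q_l}$. *)

theory Defs
  imports Complex_Main "Jordan_Normal_Form.Matrix"
begin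

text \<open>Real 3-way arrays, represented as functions on (0-based) index triples;
  the shape is carried separately as explicit dimensions.\<close>
type_synonym arr3 = "nat \<Rightarrow> nat \<Rightarrow> nat \<Rightarrow> real"

definition inner3 :: "nat \<times> nat \<times> nat \<Rightarrow> arr3 \<Rightarrow> arr3 \<Rightarrow> real" where
  "inner3 dm U V = (case dm of (a1, a2, a3) \<Rightarrow>
     (\<Sum>h<a1. \<Sum>j<a2. \<Sum>k<a3. U h j k * V h j k))"

definition fnorm3 :: "nat \<times> nat \<times> nat \<Rightarrow> arr3 \<Rightarrow> real" where
  "fnorm3 dm U = sqrt (inner3 dm U U)"

definition dist3 :: "nat \<times> nat \<times> nat \<Rightarrow> arr3 \<Rightarrow> arr3 \<Rightarrow> real" where
  "dist3 dm U V = sqrt (1 - (inner3 dm U V)\<^sup>2 / ((fnorm3 dm U)\<^sup>2 * (fnorm3 dm V)\<^sup>2))"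

text \<open>Kronecker product A \<otimes> B, where B has shape (b1,b2,b3) (0-based version of
  the paper's index formula).\<close>
definition kron3 :: "nat \<times> nat \<times> nat \<Rightarrow> arr3 \<Rightarrow> arr3 \<Rightarrow> arr3" where
  "kron3 bd A B = (case bd of (b1, b2, b3) \<Rightarrow>
     (\<lambda>h j k. A (h div b1) (j div b2) (k div b3) * B (h mod b1) (j mod b2) (k mod b3)))"

definition one3 :: arr3 where "one3 = (\<lambda>_ _ _. 1)"

definition dims :: "(nat \<Rightarrow> nat) \<Rightarrow> (nat \<Rightarrow> nat) \<Rightarrow> (nat \<Rightarrow> nat) \<Rightarrow> nat set \<Rightarrow> nat \<times> nat \<times> nat" where
  "dims d p q S = (prod d S, prod p S, prod q S)"

fun kprod :: "(nat \<Rightarrow> nat) \<Rightarrow> (nat \<Rightarrow> nat) \<Rightarrow> (nat \<Rightarrow> nat) \<Rightarrow> (nat \<Rightarrow> arr3) \<Rightarrow> nat \<Rightarrow> nat \<Rightarrow> arr3" where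
  "kprod d p q B lo 0 = one3"
| "kprod d p q B lo (Suc m) = kron3 (dims d p q {lo..<lo+m}) (B (lo+m)) (kprod d p q B lo m)"

text \<open>\<Otimes>_{l=hi}^{lo} B_l, i.e. B_hi \<otimes> ... \<otimes> B_lo (empty product = 1).\<close>
definition kron_range :: "(nat \<Rightarrow> nat) \<Rightarrow> (nat \<Rightarrow> nat) \<Rightarrow> (nat \<Rightarrow> nat) \<Rightarrow> (nat \<Rightarrow> arr3) \<Rightarrow> nat \<Rightarrow> nat \<Rightarrow> arr3" where
  "kron_range d p q B hi lo = kprod d p q B lo (Suc hi - lo)"

definition RIP :: "nat \<Rightarrow> (nat \<Rightarrow> nat) \<Rightarrow> (nat \<Rightarrow> nat) \<Rightarrow> (nat \<Rightarrow> nat) \<Rightarrow> nat \<Rightarrow> (nat \<Rightarrow> arr3) \<Rightarrow> real \<Rightarrow> bool" where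
  "RIP L d p q n X \<delta> \<longleftrightarrow>
     (\<forall>B1 B2 :: nat \<Rightarrow> arr3.
        let S = (\<lambda>h j k. kron_range d p q B1 L 1 h j k + kron_range d p q B2 L 1 h j k);
            D = dims d p q {1..L};
            E = (1 / real n) * (\<Sum>i=1..n. (inner3 D (X i) S)\<^sup>2)
        in (1 - \<delta>) * (fnorm3 D S)\<^sup>2 \<le> E \<and> E \<le> (1 + \<delta>) * (fnorm3 D S)\<^sup>2)"

definition unit3 :: "nat \<Rightarrow> nat \<Rightarrow> nat \<Rightarrow> arr3" where
  "unit3 h j k = (\<lambda>h' j' k'. if h' = h \<and> j' = j \<and> k' = k then 1 else 0)"

text \<open>The array Xtilde_i^(l)(A,G) in R^{d_l x p_l x q_l}: its (h,j,k) entry is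
  <X_i, A \<otimes> e_{hjk} \<otimes> G>, which is the unique array with
  <Xtilde, B> = <X_i, A \<otimes> B \<otimes> G> for all B (entries outside the shape set to 0).\<close>
definition Xtilde :: "nat \<Rightarrow> (nat \<Rightarrow> nat) \<Rightarrow> (nat \<Rightarrow> nat) \<Rightarrow> (nat \<Rightarrow> nat) \<Rightarrow> nat \<Rightarrow> arr3 \<Rightarrow> arr3 \<Rightarrow> arr3 \<Rightarrow> arr3" where
  "Xtilde L d p q l Xi A G = (\<lambda>h j k.
     if h < d l \<and> j < p l \<and> k < q l then
       inner3 (dims d p q {1..L}) Xi
         (kron3 (dims d p q {1..l}) A (kron3 (dims d p q {1..<l}) (unit3 h j k) G))
     else 0)"

definition vec3 :: "nat \<times> nat \<times> nat \<Rightarrow> arr3 \<Rightarrow> real vec" where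
  "vec3 dm U = (case dm of (a1, a2, a3) \<Rightarrow>
     vec (a1 * a2 * a3) (\<lambda>r. U (r div (a2 * a3)) ((r div a3) mod a2) (r mod a3)))"

definition cov_mat :: "nat \<Rightarrow> nat \<Rightarrow> (nat \<Rightarrow> real vec) \<Rightarrow> (nat \<Rightarrow> real vec) \<Rightarrow> real mat" where
  "cov_mat m n x y = mat m m (\<lambda>(a, b). (1 / real n) * (\<Sum>i=1..n. x i $ a * y i $ b))"

definition mat_inv :: "nat \<Rightarrow> real mat \<Rightarrow> real mat" where
  "mat_inv m A = (SOME B. B \<in> carrier_mat m m \<and> A * B = 1\<^sub>m m \<and> B * A = 1\<^sub>m m)"

definition vnorm :: "real vec \<Rightarrow> real" where
  "vnorm v = sqrt (v \<bullet> v)"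

definition spec_norm :: "nat \<Rightarrow> real mat \<Rightarrow> real" where
  "spec_norm m M = Sup {vnorm (M *\<^sub>v v) | v. v \<in> carrier_vec m \<and> vnorm v \<le> 1}"

end

theory Submission
  imports Defs "Jordan_Normal_Form.Determinant"
begin

text \<open>Write \<open>c = \<langle>Ah, A\<rangle>\<close>. Along mode \<open>l\<close> the design vectors are linear functionals of
  slice arrays: \<open>xh i \<bullet> u = \<langle>X i, Ah \<otimes> U \<otimes> Gh\<rangle>\<close> and
  \<open>(c xh i - x i) \<bullet> v = \<langle>X i, (c Ah - A) \<otimes> V \<otimes> Gh\<rangle>\<close>, where \<open>U, V\<close> are \<open>u, v\<close> reshaped.
  These are sums of two Kronecker products, so RIP applies to them. It makes \<open>Sh\<close> coercive,
  \<open>u \<bullet> Sh u \<ge> (1 - \<delta>) |u|\<^sup>2\<close>; and since the two arrays are orthogonal with norms \<open>|u|\<close> and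
  \<open>dist(Ah, A) |v|\<close>, polarization bounds \<open>u \<bullet> (c Sh - S) v\<close> by \<open>\<delta> dist(Ah, A) |u| |v|\<close>.
  For \<open>u = Sh\<^sup>-\<^sup>1 (c Sh - S) v\<close> the two bounds combine to
  \<open>|u| \<le> \<delta> / (1 - \<delta>) dist(Ah, A) |v|\<close>, which is stronger than the claim.\<close>

lemma div_mod_mult2_eqs:
  fixes h b c :: nat
  assumes "c > 0"
  shows "h div (b*c) = h div c div b" "h mod (b*c) div c = h div c mod b"
    "h mod (b*c) mod c = h mod c"
proof -
  show "h div (b*c) = h div c div b" by (metis div_mult2_eq mult.commute)
  have m: "h mod (c*b) = c * (h div c mod b) + h mod c" by (rule mod_mult2_eq)
  show "h mod (b*c) div c = h div c mod b" using m assms by (simp add: mult.commute)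
  show "h mod (b*c) mod c = h mod c" using m assms by (simp add: mult.commute)
qed

lemma sum_div_mod:
  fixes F :: "nat \<Rightarrow> nat \<Rightarrow> 'a::comm_monoid_add"
  shows "(\<Sum>h<a*b. F (h div b) (h mod b)) = (\<Sum>i<a. \<Sum>j<b. F i j)"
proof (cases "b = 0")
  case False
  have "(\<Sum>h<a*b. F (h div b) (h mod b)) = (\<Sum>i<a. \<Sum>h\<in>{i*b..<i*b+b}. F (h div b) (h mod b))"
    using sum.nat_group[of "\<lambda>h. F (h div b) (h mod b)" b a] by simp
  also have "\<dots> = (\<Sum>i<a. \<Sum>j<b. F i j)"
  proof (rule sum.cong[OF refl])
    fix i
    have "(\<Sum>h\<in>{i*b..<i*b+b}. F (h div b) (h mod b))
        = (\<Sum>j\<in>{0..<b}. F ((j + i*b) div b) ((j + i*b) mod b))"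
      using sum.shift_bounds_nat_ivl[of "\<lambda>h. F (h div b) (h mod b)" 0 "i*b" b]
      by (simp add: add.commute)
    also have "\<dots> = (\<Sum>j<b. F i j)"
      using False by (auto intro!: sum.cong simp: atLeast0LessThan)
    finally show "(\<Sum>h\<in>{i*b..<i*b+b}. F (h div b) (h mod b)) = (\<Sum>j<b. F i j)" .
  qed
  finally show ?thesis .
qed simp

lemma sum_div_mod_product:
  fixes f g :: "nat \<Rightarrow> 'a::comm_semiring_1"
  shows "(\<Sum>h<a*b. f (h div b) * g (h mod b)) = (\<Sum>i<a. f i) * (\<Sum>j<b. g j)"
  using sum_div_mod[where F="\<lambda>i j. f i * g j"] by (simp add: sum_product)

definition box3 :: "nat \<times> nat \<times> nat \<Rightarrow> (nat \<times> nat \<times> nat) set" where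
  "box3 dm = (case dm of (a1, a2, a3) \<Rightarrow> {..<a1} \<times> {..<a2} \<times> {..<a3})"

definition entry3 :: "arr3 \<Rightarrow> nat \<times> nat \<times> nat \<Rightarrow> real" where
  "entry3 U w = U (fst w) (fst (snd w)) (snd (snd w))"

lemma finite_box3: "finite (box3 dm)"
  by (cases dm) (auto simp: box3_def)

lemma inner3_eq_sum_box3: "inner3 dm U V = (\<Sum>w\<in>box3 dm. entry3 U w * entry3 V w)"
proof -
  obtain a1 a2 a3 where dm: "dm = (a1, a2, a3)" by (cases dm) auto
  show ?thesis
    unfolding dm inner3_def box3_def entry3_def by (simp add: sum.cartesian_product split_def)
qed

lemma inner3_commute: "inner3 dm U V = inner3 dm V U"
  unfolding inner3_eq_sum_box3 by (simp add: mult.commute)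

lemma inner3_self_nonneg: "0 \<le> inner3 dm U U"
  unfolding inner3_eq_sum_box3 by (auto intro: sum_nonneg)

lemma inner3_add_left:
  "inner3 dm (\<lambda>h j k. U h j k + V h j k) W = inner3 dm U W + inner3 dm V W"
  unfolding inner3_eq_sum_box3 entry3_def by (simp add: distrib_right sum.distrib)

lemma inner3_add_right:
  "inner3 dm W (\<lambda>h j k. U h j k + V h j k) = inner3 dm W U + inner3 dm W V"
  using inner3_add_left[of dm U V W] by (simp add: inner3_commute)

lemma inner3_scale_left: "inner3 dm (\<lambda>h j k. a * U h j k) W = a * inner3 dm U W"
  unfolding inner3_eq_sum_box3 entry3_def by (simp add: sum_distrib_left mult_ac)

lemma inner3_scale_right: "inner3 dm W (\<lambda>h j k. a * U h j k) = a * inner3 dm W U"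
  using inner3_scale_left[of dm a U W] by (simp add: inner3_commute)

lemma inner3_zero_left: "inner3 dm (\<lambda>h j k. 0) W = 0"
  using inner3_scale_left[of dm 0 W W] by simp

lemma inner3_zero_right: "inner3 dm W (\<lambda>h j k. 0) = 0"
  using inner3_scale_right[of dm W 0 W] by simp

lemma inner3_cong:
  assumes "\<And>h j k. h < a1 \<Longrightarrow> j < a2 \<Longrightarrow> k < a3 \<Longrightarrow> U h j k = U' h j k \<and> V h j k = V' h j k"
  shows "inner3 (a1, a2, a3) U V = inner3 (a1, a2, a3) U' V'"
  unfolding inner3_def using assms by (auto intro!: sum.cong)

lemma inner3_kron3:
  assumes "b1 > 0" "b2 > 0" "b3 > 0"
  shows "inner3 (a1*b1, a2*b2, a3*b3) (kron3 (b1, b2, b3) A B) (kron3 (b1, b2, b3) A' B')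
     = inner3 (a1, a2, a3) A A' * inner3 (b1, b2, b3) B B'"
proof -
  let ?a = "\<lambda>h j k. A h j k * A' h j k" and ?b = "\<lambda>h j k. B h j k * B' h j k"
  have "inner3 (a1*b1, a2*b2, a3*b3) (kron3 (b1, b2, b3) A B) (kron3 (b1, b2, b3) A' B')
     = (\<Sum>h<a1*b1. \<Sum>j<a2*b2. \<Sum>k<a3*b3.
          ?a (h div b1) (j div b2) (k div b3) * ?b (h mod b1) (j mod b2) (k mod b3))"
    unfolding inner3_def kron3_def by (simp add: mult_ac)
  also have "\<dots> = (\<Sum>h<a1*b1. \<Sum>j<a2*b2. (\<Sum>k<a3. ?a (h div b1) (j div b2) k)
          * (\<Sum>k<b3. ?b (h mod b1) (j mod b2) k))"
    by (intro sum.cong refl, rule sum_div_mod_product)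
  also have "\<dots> = (\<Sum>h<a1*b1. (\<Sum>j<a2. \<Sum>k<a3. ?a (h div b1) j k)
          * (\<Sum>j<b2. \<Sum>k<b3. ?b (h mod b1) j k))"
    by (intro sum.cong refl, rule sum_div_mod_product[where f="\<lambda>j. \<Sum>k<a3. ?a _ j k" and g="\<lambda>j. \<Sum>k<b3. ?b _ j k"])
  also have "\<dots> = inner3 (a1, a2, a3) A A' * inner3 (b1, b2, b3) B B'"
    unfolding inner3_def prod.case
    by (rule sum_div_mod_product[where f="\<lambda>h. \<Sum>j<a2. \<Sum>k<a3. ?a h j k" and g="\<lambda>h. \<Sum>j<b2. \<Sum>k<b3. ?b h j k"])
  finally show ?thesis .
qed

lemma kron3_assoc:
  assumes "c1 > 0" "c2 > 0" "c3 > 0"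
  shows "kron3 (c1, c2, c3) (kron3 (b1, b2, b3) A B) C
       = kron3 (b1*c1, b2*c2, b3*c3) A (kron3 (c1, c2, c3) B C)"
  unfolding kron3_def using assms by (auto simp: div_mod_mult2_eqs fun_eq_iff mult.assoc)

lemma kron3_one_left:
  assumes "h < b1" "j < b2" "k < b3"
  shows "kron3 (b1, b2, b3) one3 B h j k = B h j k"
  unfolding kron3_def one3_def using assms by simp

lemma kprod_cong:
  assumes "\<And>k. lo \<le> k \<Longrightarrow> k < lo + m \<Longrightarrow> F k = F' k"
  shows "kprod d p q F lo m = kprod d p q F' lo m"
  using assms by (induction m) auto

lemma kprod_add:
  assumes "\<forall>k\<in>{lo..<lo+m1+Suc m2}. d k > 0 \<and> p k > 0 \<and> q k > 0"
  shows "kprod d p q F lo (m1 + Suc m2)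
       = kron3 (dims d p q {lo..<lo+m1}) (kprod d p q F (lo+m1) (Suc m2)) (kprod d p q F lo m1)"
  using assms
proof (induction m2)
  case 0
  then show ?case by (simp add: dims_def kron3_def one3_def)
next
  case (Suc m2)
  have "\<forall>k\<in>{lo..<lo+m1}. d k > 0 \<and> p k > 0 \<and> q k > 0" using Suc.prems by auto
  then have pos: "prod d {lo..<lo+m1} > 0" "prod p {lo..<lo+m1} > 0" "prod q {lo..<lo+m1} > 0"
    by (simp_all add: prod_pos)
  have split: "prod g {lo..<lo+(m1+k)} = prod g {lo+m1..<lo+m1+k} * prod g {lo..<lo+m1}"
    for g :: "nat \<Rightarrow> nat" and k
    using prod.atLeastLessThan_concat[of lo "lo+m1" "lo+m1+k" g] by (simp add: mult.commute add.assoc)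
  have IH: "kprod d p q F lo (m1 + Suc m2)
      = kron3 (dims d p q {lo..<lo+m1}) (kprod d p q F (lo+m1) (Suc m2)) (kprod d p q F lo m1)"
    using Suc by auto
  have lhs: "kprod d p q F lo (m1 + Suc (Suc m2)) = kron3 (dims d p q {lo..<lo+(m1+Suc m2)})
      (F (lo+(m1+Suc m2))) (kprod d p q F lo (m1+Suc m2))"
    by (simp only: add_Suc_right kprod.simps)
  have rhs: "kprod d p q F (lo+m1) (Suc (Suc m2)) = kron3 (dims d p q {lo+m1..<lo+m1+Suc m2})
      (F (lo+m1+Suc m2)) (kprod d p q F (lo+m1) (Suc m2))"
    by (simp only: kprod.simps)
  show ?case
    unfolding lhs rhs IH unfolding dims_def split by (simp only: kron3_assoc[OF pos] add.assoc)
qed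

text \<open>Only entries inside the box are claimed: for \<open>l = L\<close> the left factor is the
  \<open>1\<times>1\<times>1\<close> array \<open>one3\<close>, which is neutral for \<open>kron3\<close> only there.\<close>
lemma kron_range_splice:
  fixes d p q :: "nat \<Rightarrow> nat"
  assumes pos: "\<forall>k\<in>{1..L}. d k > 0 \<and> p k > 0 \<and> q k > 0"
    and l: "l \<in> {1..L}"
    and hjk: "h < prod d {1..L}" "j < prod p {1..L}" "k < prod q {1..L}"
  shows "kron_range d p q (\<lambda>k. if k < l then G k else if k = l then B else A k) L 1 h j k
    = kron3 (dims d p q {1..l}) (kron_range d p q A L (l+1))
        (kron3 (dims d p q {1..<l}) B (kron_range d p q G (l-1) 1)) h j k"
proof -
  define F where "F = (\<lambda>k. if k < l then G k else if k = l then B else A k)"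
  have l1: "1 \<le> l" "l \<le> L" using l by auto
  have "kprod d p q F 1 ((l-1) + Suc 0)
      = kron3 (dims d p q {1..<1+(l-1)}) (kprod d p q F (1+(l-1)) (Suc 0)) (kprod d p q F 1 (l-1))"
    by (rule kprod_add) (use pos l1 in auto)
  moreover have "kprod d p q F 1 (l-1) = kprod d p q G 1 (l-1)"
    by (rule kprod_cong) (auto simp: F_def)
  moreover have "kprod d p q F (1+(l-1)) (Suc 0) = B"
    using l1 by (simp add: F_def dims_def kron3_def one3_def)
  ultimately have lower: "kprod d p q F 1 l = kron3 (dims d p q {1..<l}) B (kron_range d p q G (l-1) 1)"
    using l1 by (simp add: kron_range_def)
  show ?thesis
  proof (cases "l = L")
    case True
    have "kron_range d p q A L (l+1) = one3" using True by (simp add: kron_range_def)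
    then show ?thesis unfolding F_def[symmetric] using True lower hjk
      by (simp add: kron_range_def dims_def kron3_one_left)
  next
    case False
    have "kprod d p q F 1 (l + Suc (L-l-1))
        = kron3 (dims d p q {1..<1+l}) (kprod d p q F (1+l) (Suc (L-l-1))) (kprod d p q F 1 l)"
      by (rule kprod_add) (use pos l1 False in auto)
    moreover have "kprod d p q F (1+l) (Suc (L-l-1)) = kprod d p q A (1+l) (Suc (L-l-1))"
      by (rule kprod_cong) (auto simp: F_def)
    moreover have "l + Suc (L-l-1) = L" "Suc (L-l-1) = Suc L - (l+1)" "{1..<1+l} = {1..l}"
      using False l1 by auto
    ultimately show ?thesis unfolding F_def[symmetric] using lower
      by (simp del: kprod.simps add: kron_range_def add.commute)
  qed
qed

lemma inner3_Xtilde: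
  fixes d p q :: "nat \<Rightarrow> nat"
  assumes DL: "dims d p q {1..l} = (d l * g1, p l * g2, q l * g3)"
    and DG: "dims d p q {1..<l} = (g1, g2, g3)"
    and g: "g1 > 0" "g2 > 0" "g3 > 0" and dl: "d l > 0" "p l > 0" "q l > 0"
  shows "inner3 (d l, p l, q l) B (Xtilde L d p q l Xi A G)
     = inner3 (dims d p q {1..L}) Xi (kron3 (dims d p q {1..l}) A (kron3 (dims d p q {1..<l}) B G))"
proof -
  define D where "D = dims d p q {1..L}"
  define Bl where "Bl = box3 (d l, p l, q l)"
  define K where "K = (\<lambda>U. kron3 (dims d p q {1..l}) A (kron3 (dims d p q {1..<l}) U G))"
  define e where "e = (\<lambda>w. unit3 (fst w) (fst (snd w)) (snd (snd w)))"
  define mid where "mid = (\<lambda>z::nat\<times>nat\<times>nat. ((fst z mod (d l * g1)) div g1,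
      (fst (snd z) mod (p l * g2)) div g2, (snd (snd z) mod (q l * g3)) div g3))"
  define cf where "cf = (\<lambda>z::nat\<times>nat\<times>nat.
      A (fst z div (d l * g1)) (fst (snd z) div (p l * g2)) (snd (snd z) div (q l * g3))
    * G ((fst z mod (d l * g1)) mod g1) ((fst (snd z) mod (p l * g2)) mod g2)
        ((snd (snd z) mod (q l * g3)) mod g3))"
  have K_entry: "entry3 (K U) z = cf z * entry3 U (mid z)" for U z
    unfolding K_def DL DG kron3_def entry3_def cf_def mid_def by simp
  have mid: "mid z \<in> Bl" for z
    using g dl unfolding mid_def Bl_def box3_def by (auto simp: div_mod_mult2_eqs)
  have e: "entry3 (e w) v = (if v = w then 1 else 0)" for v w
    unfolding entry3_def unit3_def e_def by (auto simp: prod_eq_iff)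
  have "inner3 (d l, p l, q l) B (Xtilde L d p q l Xi A G)
      = (\<Sum>w\<in>Bl. entry3 B w * (\<Sum>z\<in>box3 D. entry3 Xi z * entry3 (K (e w)) z))"
    unfolding inner3_eq_sum_box3 Bl_def
    by (rule sum.cong[OF refl]) (auto simp: box3_def entry3_def Xtilde_def D_def K_def e_def inner3_eq_sum_box3)
  also have "\<dots> = (\<Sum>z\<in>box3 D. entry3 Xi z * (\<Sum>w\<in>Bl. entry3 B w * entry3 (K (e w)) z))"
    by (simp add: sum_distrib_left mult.left_commute sum.swap[of _ Bl])
  also have "\<dots> = (\<Sum>z\<in>box3 D. entry3 Xi z * entry3 (K B) z)"
  proof (rule sum.cong[OF refl])
    fix z
    have "(\<Sum>w\<in>Bl. entry3 B w * entry3 (K (e w)) z) = (\<Sum>w\<in>Bl. if w = mid z then cf z * entry3 B (mid z) else 0)"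
      by (rule sum.cong[OF refl]) (auto simp: K_entry e)
    also have "\<dots> = entry3 (K B) z"
      using mid[of z] finite_box3[of "(d l, p l, q l)"] by (simp add: Bl_def sum.delta' K_entry)
    finally show "entry3 Xi z * (\<Sum>w\<in>Bl. entry3 B w * entry3 (K (e w)) z) = entry3 Xi z * entry3 (K B) z"
      by simp
  qed
  also have "\<dots> = inner3 D Xi (K B)" by (simp add: inner3_eq_sum_box3)
  finally show ?thesis unfolding D_def K_def .
qed

definition arr_of_vec :: "nat \<Rightarrow> nat \<Rightarrow> real vec \<Rightarrow> arr3" where
  "arr_of_vec a2 a3 v = (\<lambda>h j k. v $ (h*(a2*a3) + j*a3 + k))"

lemma scalar_prod_vec3:
  assumes a: "a2 > 0" "a3 > 0" and v: "v \<in> carrier_vec (a1*a2*a3)"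
  shows "vec3 (a1, a2, a3) U \<bullet> v = inner3 (a1, a2, a3) (arr_of_vec a2 a3 v) U"
proof -
  have dv: "dim_vec v = a1*(a2*a3)" using v by (simp add: mult.assoc)
  have "vec3 (a1, a2, a3) U \<bullet> v = (\<Sum>r<a1*(a2*a3). U (r div (a2*a3)) ((r div a3) mod a2) (r mod a3) * v $ r)"
    unfolding vec3_def scalar_prod_def dv by (simp add: atLeast0LessThan mult.assoc)
  also have "\<dots> = (\<Sum>r<a1*(a2*a3). (\<lambda>i s. U i (s div a3) (s mod a3) * v $ (i*(a2*a3) + s))
      (r div (a2*a3)) (r mod (a2*a3)))"
  proof (intro sum.cong refl)
    fix r
    have e: "r div (a2*a3) * (a2*a3) + r mod (a2*a3) = r" by (rule div_mult_mod_eq)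
    show "U (r div (a2*a3)) ((r div a3) mod a2) (r mod a3) * v $ r
        = (\<lambda>i s. U i (s div a3) (s mod a3) * v $ (i*(a2*a3) + s)) (r div (a2*a3)) (r mod (a2*a3))"
      using a by (simp only: e div_mod_mult2_eqs(2,3))
  qed
  also have "\<dots> = (\<Sum>i<a1. \<Sum>s<a2*a3. U i (s div a3) (s mod a3) * v $ (i*(a2*a3) + s))"
    by (rule sum_div_mod)
  also have "\<dots> = (\<Sum>i<a1. \<Sum>j<a2. \<Sum>k<a3. U i j k * v $ (i*(a2*a3) + (j*a3+k)))"
  proof (rule sum.cong[OF refl])
    fix i
    have "(\<Sum>s<a2*a3. U i (s div a3) (s mod a3) * v $ (i*(a2*a3) + s))
      = (\<Sum>s<a2*a3. (\<lambda>j k. U i j k * v $ (i*(a2*a3) + (j*a3+k))) (s div a3) (s mod a3))"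
      by (rule sum.cong[OF refl]) (simp only: div_mult_mod_eq)
    also have "\<dots> = (\<Sum>j<a2. \<Sum>k<a3. U i j k * v $ (i*(a2*a3) + (j*a3+k)))"
      by (rule sum_div_mod)
    finally show "(\<Sum>s<a2*a3. U i (s div a3) (s mod a3) * v $ (i*(a2*a3) + s))
        = (\<Sum>j<a2. \<Sum>k<a3. U i j k * v $ (i*(a2*a3) + (j*a3+k)))" .
  qed
  also have "\<dots> = inner3 (a1, a2, a3) (arr_of_vec a2 a3 v) U"
    unfolding inner3_def arr_of_vec_def by (simp add: mult.commute add.assoc)
  finally show ?thesis .
qed

lemma vec3_arr_of_vec:
  assumes a: "a2 > 0" "a3 > 0" and v: "v \<in> carrier_vec (a1*a2*a3)"
  shows "vec3 (a1, a2, a3) (arr_of_vec a2 a3 v) = v"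
proof (rule eq_vecI)
  show "dim_vec (vec3 (a1, a2, a3) (arr_of_vec a2 a3 v)) = dim_vec v" using v by (simp add: vec3_def)
  fix r assume "r < dim_vec v"
  then have r: "r < a1*a2*a3" using v by simp
  have m: "r mod (a3*a2) = a3*(r div a3 mod a2) + r mod a3" by (rule mod_mult2_eq)
  have "r div (a2*a3) * (a2*a3) + (r div a3 mod a2)*a3 + r mod a3 = r"
    using m by (metis add.assoc div_mult_mod_eq mult.commute)
  then show "vec3 (a1, a2, a3) (arr_of_vec a2 a3 v) $ r = v $ r"
    using r by (simp add: vec3_def arr_of_vec_def)
qed

lemma scalar_prod_eq_inner3:
  assumes a: "a2 > 0" "a3 > 0" and u: "u \<in> carrier_vec (a1*a2*a3)" and v: "v \<in> carrier_vec (a1*a2*a3)"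
  shows "u \<bullet> v = inner3 (a1, a2, a3) (arr_of_vec a2 a3 u) (arr_of_vec a2 a3 v)"
  using scalar_prod_vec3[OF a v, of "arr_of_vec a2 a3 u"] vec3_arr_of_vec[OF a u]
  by (simp add: inner3_commute)

lemma cov_mat_bilinear_form:
  assumes w: "w \<in> carrier_vec m" and v: "v \<in> carrier_vec m"
    and x: "\<And>i. x i \<in> carrier_vec m" and y: "\<And>i. y i \<in> carrier_vec m"
  shows "w \<bullet> (cov_mat m n x y *\<^sub>v v) = (1 / real n) * (\<Sum>i=1..n. (w \<bullet> x i) * (y i \<bullet> v))"
proof -
  have dx: "dim_vec (x i) = m" "dim_vec (y i) = m" for i using x y by auto
  have dv: "dim_vec v = m" using v by auto
  have "w \<bullet> (cov_mat m n x y *\<^sub>v v) = (\<Sum>a<m. w $ a * (\<Sum>b<m. ((1 / real n) * (\<Sum>i=1..n. x i $ a * y i $ b)) * v $ b))"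
    unfolding scalar_prod_def cov_mat_def mult_mat_vec_def
    by (simp add: dv atLeast0LessThan row_def)
  also have "\<dots> = (1 / real n) * (\<Sum>a<m. \<Sum>b<m. \<Sum>i=1..n. w $ a * x i $ a * (y i $ b * v $ b))"
    by (simp add: sum_distrib_left sum_distrib_right mult_ac)
  also have "\<dots> = (1 / real n) * (\<Sum>i=1..n. \<Sum>a<m. \<Sum>b<m. w $ a * x i $ a * (y i $ b * v $ b))"
  proof -
    have "(\<Sum>a<m. \<Sum>b<m. \<Sum>i=1..n. w $ a * x i $ a * (y i $ b * v $ b)) = (\<Sum>a<m. \<Sum>i=1..n. \<Sum>b<m. w $ a * x i $ a * (y i $ b * v $ b))"
      by (rule sum.cong[OF refl]) (rule sum.swap)
    also have "\<dots> = (\<Sum>i=1..n. \<Sum>a<m. \<Sum>b<m. w $ a * x i $ a * (y i $ b * v $ b))"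
      by (rule sum.swap)
    finally show ?thesis by simp
  qed
  also have "\<dots> = (1 / real n) * (\<Sum>i=1..n. (w \<bullet> x i) * (y i \<bullet> v))"
    unfolding scalar_prod_def dx dv by (simp add: atLeast0LessThan sum_product)
  finally show ?thesis .
qed

lemma cov_mat_smult_diff:
  assumes x: "\<And>i. x i \<in> carrier_vec m" and y: "\<And>i. y i \<in> carrier_vec m"
  shows "c \<cdot>\<^sub>m cov_mat m n x x - cov_mat m n x y = cov_mat m n x (\<lambda>i. c \<cdot>\<^sub>v x i - y i)"
proof -
  have d: "dim_vec (x i) = m" "dim_vec (y i) = m" for i using x y by auto
  show ?thesis unfolding cov_mat_def
    by (rule eq_matI) (auto simp: d algebra_simps diff_divide_distrib sum_subtractf sum_distrib_left)
qed

lemma amgm_bound: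
  fixes C a b \<delta> :: real
  assumes "a \<ge> 0" "b \<ge> 0" and bound: "\<And>t. t > 0 \<Longrightarrow> 2*t*C \<le> \<delta>*(a^2 + t^2*b^2)"
  shows "C \<le> \<delta>*a*b"
proof (cases "a > 0 \<and> b > 0")
  case True
  have "2*(a/b)*C \<le> \<delta>*(a^2 + (a/b)^2*b^2)" using True by (intro bound) simp
  then show ?thesis using True by (simp add: power2_eq_square field_simps)
next
  case False
  show ?thesis
  proof (rule ccontr)
    assume "\<not> C \<le> \<delta>*a*b"
    then have C: "C > 0" using False assms(1,2) by auto
    show False
    proof (cases "b = 0")
      case True
      define t where "t = (\<bar>\<delta>\<bar>*a^2 + 1) / C"
      have tp: "t > 0" using C by (simp add: t_def add_nonneg_pos)
      have "2*(\<bar>\<delta>\<bar>*a^2 + 1) = 2*t*C" using C by (simp add: t_def)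
      also have "\<dots> \<le> \<delta>*a^2" using bound[OF tp] True by simp
      also have "\<dots> \<le> \<bar>\<delta>\<bar>*a^2" by (simp add: mult_right_mono)
      finally show False by (smt (verit) abs_ge_zero zero_le_power2 mult_nonneg_nonneg)
    next
      case False
      then have a: "a = 0" and b: "b > 0" using \<open>\<not> (a > 0 \<and> b > 0)\<close> assms(1,2) by auto
      define t where "t = C / (\<bar>\<delta>\<bar>*b^2 + 1)"
      have tp: "t > 0" using C by (simp add: t_def add_nonneg_pos)
      have "2*t*C \<le> \<delta>*(t^2*b^2)" using bound[OF tp] a by simp
      then have "2*C \<le> \<delta>*t*b^2" using tp by (simp add: power2_eq_square mult_ac)
      also have "\<dots> \<le> \<bar>\<delta>\<bar>*b^2*t" using tp by (simp add: mult_right_mono mult_ac)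
      also have "\<dots> < C"
      proof -
        have "0 < \<bar>\<delta>\<bar>*b^2 + 1" by (simp add: add_nonneg_pos)
        then show ?thesis using C unfolding t_def by (simp add: divide_less_eq mult.commute)
      qed
      finally show False using C by simp
    qed
  qed
qed

lemma polarization_le:
  fixes y z :: "'i \<Rightarrow> real" and w a b \<delta> :: real
  assumes "a \<ge> 0" "b \<ge> 0"
    and lower: "\<And>t. (1 - \<delta>) * (a^2 + t^2*b^2) \<le> w * (\<Sum>i\<in>I. (y i + t * z i)^2)"
    and upper: "\<And>t. w * (\<Sum>i\<in>I. (y i + t * z i)^2) \<le> (1 + \<delta>) * (a^2 + t^2*b^2)"
  shows "w * (\<Sum>i\<in>I. y i * z i) \<le> \<delta> * a * b"
proof (rule amgm_bound[OF assms(1,2)])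
  fix t :: real
  have "(y i + t * z i)^2 - (y i + (-t) * z i)^2 = 4 * t * (y i * z i)" for i
    by (simp add: power2_eq_square algebra_simps)
  then have "w * (\<Sum>i\<in>I. (y i + t * z i)^2) - w * (\<Sum>i\<in>I. (y i + (-t) * z i)^2)
      = 4 * t * (w * (\<Sum>i\<in>I. y i * z i))"
    by (simp add: right_diff_distrib[symmetric] sum_subtractf[symmetric] sum_distrib_left mult_ac)
  then show "2 * t * (w * (\<Sum>i\<in>I. y i * z i)) \<le> \<delta> * (a^2 + t^2*b^2)"
    using upper[of t] lower[of "-t"] by (simp add: algebra_simps)
qed

lemma scalar_prod_self_nonneg: "0 \<le> (u :: real vec) \<bullet> u"
  unfolding scalar_prod_def by (auto intro: sum_nonneg)

lemma vnorm_nonneg: "0 \<le> vnorm u"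
  by (simp add: vnorm_def scalar_prod_self_nonneg)

lemma vnorm_square: "(vnorm u)^2 = u \<bullet> u"
  by (simp add: vnorm_def scalar_prod_self_nonneg)

lemma scalar_prod_self_eq_0_iff:
  assumes "(u :: real vec) \<in> carrier_vec m"
  shows "u \<bullet> u = 0 \<longleftrightarrow> u = 0\<^sub>v m"
  using conjugate_square_eq_0_vec[OF assms] by (simp add: scalar_prod_def conjugate_vec_def)

lemma mat_inv_if_coercive:
  fixes S :: "real mat"
  assumes S: "S \<in> carrier_mat m m" and "\<epsilon> > 0"
    and coercive: "\<And>u. u \<in> carrier_vec m \<Longrightarrow> \<epsilon> * (u \<bullet> u) \<le> u \<bullet> (S *\<^sub>v u)"
  shows "invertible_mat S" "mat_inv m S \<in> carrier_mat m m" "S * mat_inv m S = 1\<^sub>m m"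
proof -
  have "u = 0\<^sub>v m" if u: "u \<in> carrier_vec m" and "S *\<^sub>v u = 0\<^sub>v m" for u
  proof -
    have "\<epsilon> * (u \<bullet> u) \<le> 0" using coercive[OF u] \<open>S *\<^sub>v u = 0\<^sub>v m\<close> u by simp
    then have "u \<bullet> u = 0"
      using \<open>\<epsilon> > 0\<close> scalar_prod_self_nonneg[of u] by (simp add: mult_le_0_iff)
    then show ?thesis using scalar_prod_self_eq_0_iff[OF u] by simp
  qed
  then have "det S \<noteq> 0" using det_0_iff_vec_prod_zero_field[OF S] by auto
  then obtain B where B: "B \<in> carrier_mat m m" "S * B = 1\<^sub>m m" "B * S = 1\<^sub>m m"
    using det_non_zero_imp_unit[OF S] S unfolding Units_def ring_mat_def by auto
  then show "invertible_mat S"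
    unfolding invertible_mat_def inverts_mat_def using S by auto
  have "mat_inv m S \<in> carrier_mat m m \<and> S * mat_inv m S = 1\<^sub>m m \<and> mat_inv m S * S = 1\<^sub>m m"
    unfolding mat_inv_def by (rule someI) (use B in blast)
  then show "mat_inv m S \<in> carrier_mat m m" "S * mat_inv m S = 1\<^sub>m m" by auto
qed

lemma spec_norm_le:
  assumes "K \<ge> 0" and bound: "\<And>v. v \<in> carrier_vec m \<Longrightarrow> vnorm (M *\<^sub>v v) \<le> K * vnorm v"
  shows "spec_norm m M \<le> K"
  unfolding spec_norm_def
proof (rule cSup_least)
  show "{vnorm (M *\<^sub>v v) |v. v \<in> carrier_vec m \<and> vnorm v \<le> 1} \<noteq> {}"
    by (auto intro!: exI[of _ "0\<^sub>v m"] simp: vnorm_def)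
  show "x \<le> K" if "x \<in> {vnorm (M *\<^sub>v v) |v. v \<in> carrier_vec m \<and> vnorm v \<le> 1}" for x
    using that bound \<open>K \<ge> 0\<close> by (force intro: order_trans mult_left_le)
qed

lemma spec_norm_inv_mult_le:
  fixes S M :: "real mat"
  assumes S: "S \<in> carrier_mat m m" and M: "M \<in> carrier_mat m m" and "\<delta> < 1" "\<beta> \<ge> 0"
    and coercive: "\<And>u. u \<in> carrier_vec m \<Longrightarrow> (1 - \<delta>) * (u \<bullet> u) \<le> u \<bullet> (S *\<^sub>v u)"
    and bounded: "\<And>u v. u \<in> carrier_vec m \<Longrightarrow> v \<in> carrier_vec m \<Longrightarrow>
        u \<bullet> (M *\<^sub>v v) \<le> \<beta> * vnorm u * vnorm v"
  shows "spec_norm m (mat_inv m S * M) \<le> \<beta> / (1 - \<delta>)"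
proof (rule spec_norm_le)
  have \<delta>: "1 - \<delta> > 0" using \<open>\<delta> < 1\<close> by simp
  note inv = mat_inv_if_coercive[OF S \<delta> coercive]
  show "\<beta> / (1 - \<delta>) \<ge> 0" using \<delta> \<open>\<beta> \<ge> 0\<close> by simp
  fix v :: "real vec" assume v: "v \<in> carrier_vec m"
  define w where "w = mat_inv m S *\<^sub>v (M *\<^sub>v v)"
  have w: "w \<in> carrier_vec m" using inv(2) M v by (simp add: w_def)
  have "S *\<^sub>v w = (S * mat_inv m S) *\<^sub>v (M *\<^sub>v v)"
    using inv(2) S M v by (simp add: w_def)
  then have Sw: "S *\<^sub>v w = M *\<^sub>v v" using inv(3) M v by simp
  have "(1 - \<delta>) * vnorm w * vnorm w \<le> \<beta> * vnorm v * vnorm w"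
    using coercive[OF w] bounded[OF w v] by (simp add: Sw vnorm_square[symmetric] power2_eq_square mult_ac)
  then have "(1 - \<delta>) * vnorm w \<le> \<beta> * vnorm v"
    using vnorm_nonneg[of w] by (cases "vnorm w = 0") (simp_all add: vnorm_nonneg \<open>\<beta> \<ge> 0\<close>)
  moreover have "(mat_inv m S * M) *\<^sub>v v = w" using inv(2) M v by (simp add: w_def)
  ultimately show "vnorm ((mat_inv m S * M) *\<^sub>v v) \<le> \<beta> / (1 - \<delta>) * vnorm v"
    using \<delta> by (simp add: field_simps)
qed

locale rip_mode_slice =
  fixes L n l :: nat and d p q :: "nat \<Rightarrow> nat" and X :: "nat \<Rightarrow> arr3" and \<delta> :: real
    and Ahf Af Ghf :: "nat \<Rightarrow> arr3"
  assumes pos: "\<forall>k\<in>{1..L}. d k > 0 \<and> p k > 0 \<and> q k > 0"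
    and rip: "RIP L d p q n X \<delta>"
    and l: "l \<in> {1..L}"
    and norm_Ah: "fnorm3 (dims d p q {l<..L}) (kron_range d p q Ahf L (l+1)) = 1"
    and norm_A: "fnorm3 (dims d p q {l<..L}) (kron_range d p q Af L (l+1)) = 1"
    and norm_Gh: "fnorm3 (dims d p q {1..<l}) (kron_range d p q Ghf (l-1) 1) = 1"
begin

abbreviation "Ah \<equiv> kron_range d p q Ahf L (l+1)"
abbreviation "A \<equiv> kron_range d p q Af L (l+1)"
abbreviation "Gh \<equiv> kron_range d p q Ghf (l-1) 1"
abbreviation "shape \<equiv> dims d p q {1..L}"
abbreviation "shape_A \<equiv> dims d p q {l<..L}"
abbreviation "shape_l \<equiv> (d l, p l, q l)"
abbreviation "dim_l \<equiv> d l * p l * q l"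
abbreviation "c \<equiv> inner3 shape_A Ah A"
abbreviation "arr \<equiv> arr_of_vec (p l) (q l)"
abbreviation Xh where "Xh i \<equiv> Xtilde L d p q l (X i) Ah Gh"
abbreviation Xa where "Xa i \<equiv> Xtilde L d p q l (X i) A Gh"
abbreviation xh where "xh i \<equiv> vec3 shape_l (Xh i)"
abbreviation xa where "xa i \<equiv> vec3 shape_l (Xa i)"
abbreviation slice_kron where
  "slice_kron Y B \<equiv> kron3 (dims d p q {1..l}) Y (kron3 (dims d p q {1..<l}) B Gh)"
abbreviation two_slices where
  "two_slices B1 B2 \<equiv> (\<lambda>h j k. slice_kron Ah B1 h j k + slice_kron A B2 h j k)"
abbreviation empirical where
  "empirical T \<equiv> 1 / real n * (\<Sum>i=1..n. (inner3 shape (X i) T)^2)"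

lemma pos_l: "0 < d l" "0 < p l" "0 < q l"
  using pos l by auto

lemma shape_factors:
  obtains a1 a2 a3 g1 g2 g3 where "0 < g1" "0 < g2" "0 < g3"
    "dims d p q {1..<l} = (g1, g2, g3)" "dims d p q {1..l} = (d l * g1, p l * g2, q l * g3)"
    "shape_A = (a1, a2, a3)" "shape = (a1 * (d l * g1), a2 * (p l * g2), a3 * (q l * g3))"
proof -
  have l1: "1 \<le> l" "l \<le> L" using l by auto
  have lower: "prod f {1..l} = f l * prod f {1..<l}" for f :: "nat \<Rightarrow> nat"
  proof -
    have "{1..l} = insert l {1..<l}" using l1 by auto
    then show ?thesis by simp
  qed
  have full: "prod f {1..L} = prod f {l<..L} * prod f {1..l}" for f :: "nat \<Rightarrow> nat"
  proof -
    have "{1..L} = {l<..L} \<union> {1..l}" "{l<..L} \<inter> {1..l} = {}" using l1 by auto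
    then show ?thesis by (metis finite_atLeastAtMost finite_greaterThanAtMost prod.union_disjoint)
  qed
  have "\<forall>k\<in>{1..<l}. 0 < d k \<and> 0 < p k \<and> 0 < q k" using pos l1 by auto
  then have "0 < prod d {1..<l}" "0 < prod p {1..<l}" "0 < prod q {1..<l}"
    by (simp_all add: prod_pos)
  then show ?thesis
    by (rule that[of "prod d {1..<l}" "prod p {1..<l}" "prod q {1..<l}"
          "prod d {l<..L}" "prod p {l<..L}" "prod q {l<..L}"])
      (simp_all only: dims_def lower full)
qed

lemma inner3_slice_kron:
  "inner3 shape (slice_kron Y B) (slice_kron Y' B') = inner3 shape_A Y Y' * inner3 shape_l B B'"
proof -
  obtain a1 a2 a3 g1 g2 g3 where g: "0 < g1" "0 < g2" "0 < g3"
    and DG: "dims d p q {1..<l} = (g1, g2, g3)"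
    and DL: "dims d p q {1..l} = (d l * g1, p l * g2, q l * g3)"
    and DA: "shape_A = (a1, a2, a3)"
    and D: "shape = (a1 * (d l * g1), a2 * (p l * g2), a3 * (q l * g3))"
    by (rule shape_factors)
  have GG: "inner3 (g1, g2, g3) Gh Gh = 1"
    using norm_Gh DG by (simp add: fnorm3_def)
  have "0 < d l * g1" "0 < p l * g2" "0 < q l * g3" using g pos_l by simp_all
  then show ?thesis
    unfolding D DL DG DA by (simp only: inner3_kron3 g GG mult_1_right)
qed

lemma inner3_Xtilde_slice:
  "inner3 shape_l B (Xtilde L d p q l Xi Y Gh) = inner3 shape Xi (slice_kron Y B)"
proof -
  obtain g1 g2 g3 where "0 < g1" "0 < g2" "0 < g3" "dims d p q {1..<l} = (g1, g2, g3)"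
    "dims d p q {1..l} = (d l * g1, p l * g2, q l * g3)"
    by (rule shape_factors)
  then show ?thesis using inner3_Xtilde pos_l by blast
qed

lemma rip_two_slices:
  "(1 - \<delta>) * inner3 shape (two_slices B1 B2) (two_slices B1 B2) \<le> empirical (two_slices B1 B2)
   \<and> empirical (two_slices B1 B2) \<le> (1 + \<delta>) * inner3 shape (two_slices B1 B2) (two_slices B1 B2)"
proof -
  let ?T = "two_slices B1 B2"
  define F1 where "F1 = (\<lambda>k. if k < l then Ghf k else if k = l then B1 else Ahf k)"
  define F2 where "F2 = (\<lambda>k. if k < l then Ghf k else if k = l then B2 else Af k)"
  define S where "S = (\<lambda>h j k. kron_range d p q F1 L 1 h j k + kron_range d p q F2 L 1 h j k)"
  have "(1 - \<delta>) * (fnorm3 shape S)^2 \<le> empirical S \<and> empirical S \<le> (1 + \<delta>) * (fnorm3 shape S)^2"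
    using rip unfolding RIP_def Let_def S_def by blast
  moreover have "S h j k = ?T h j k"
    if "h < prod d {1..L}" "j < prod p {1..L}" "k < prod q {1..L}" for h j k
    unfolding S_def F1_def F2_def using kron_range_splice[OF pos l that] by simp
  then have "inner3 shape (X i) S = inner3 shape (X i) ?T" "inner3 shape S S = inner3 shape ?T ?T" for i
    unfolding dims_def by (auto intro: inner3_cong)
  ultimately show ?thesis by (simp add: fnorm3_def inner3_self_nonneg)
qed

lemma inner3_X_two_slices:
  "inner3 shape (X i) (two_slices B1 B2) = inner3 shape_l B1 (Xh i) + inner3 shape_l B2 (Xa i)"
  unfolding inner3_add_right inner3_Xtilde_slice ..

lemma inner3_self_Ah: "inner3 shape_A Ah Ah = 1"
  using norm_Ah by (simp add: fnorm3_def)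

lemma inner3_self_A: "inner3 shape_A A A = 1"
  using norm_A by (simp add: fnorm3_def)

lemma inner3_two_slices:
  "inner3 shape (two_slices B1 B2) (two_slices B1 B2)
     = inner3 shape_l B1 B1 + 2 * c * inner3 shape_l B1 B2 + inner3 shape_l B2 B2"
  unfolding inner3_add_left inner3_add_right inner3_slice_kron inner3_self_Ah inner3_self_A
    inner3_commute[of shape_A A Ah] inner3_commute[of shape_l B2 B1]
  by simp

lemma c_square_le_1: "c^2 \<le> 1"
proof -
  have "0 \<le> inner3 shape_A (\<lambda>h j k. c * Ah h j k + (-1) * A h j k) (\<lambda>h j k. c * Ah h j k + (-1) * A h j k)"
    by (rule inner3_self_nonneg)
  also have "\<dots> = 1 - c^2"
    unfolding inner3_add_left inner3_add_right inner3_scale_left inner3_scale_right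
      inner3_self_Ah inner3_self_A inner3_commute[of shape_A A Ah]
    by (simp add: power2_eq_square)
  finally show ?thesis by simp
qed

lemma dist3_Ah_A: "dist3 shape_A Ah A = sqrt (1 - c^2)"
  unfolding dist3_def fnorm3_def inner3_self_Ah inner3_self_A by simp

lemma carrier_xh: "xh i \<in> carrier_vec dim_l" "xa i \<in> carrier_vec dim_l"
  unfolding vec3_def prod.case by (rule vec_carrier)+

lemma scalar_prod_xh:
  assumes "u \<in> carrier_vec dim_l"
  shows "xh i \<bullet> u = inner3 shape_l (arr u) (Xh i)" "xa i \<bullet> u = inner3 shape_l (arr u) (Xa i)"
  using scalar_prod_vec3[OF pos_l(2,3) assms] by simp_all

lemma scalar_prod_arr:
  assumes "u \<in> carrier_vec dim_l" "v \<in> carrier_vec dim_l"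
  shows "u \<bullet> v = inner3 shape_l (arr u) (arr v)"
  using scalar_prod_eq_inner3[OF pos_l(2,3) assms] .

lemma cov_mat_coercive:
  assumes u: "u \<in> carrier_vec dim_l"
  shows "(1 - \<delta>) * (u \<bullet> u) \<le> u \<bullet> (cov_mat dim_l n xh xh *\<^sub>v u)"
proof -
  let ?T = "two_slices (arr u) (\<lambda>h j k. 0)"
  have "inner3 shape ?T ?T = u \<bullet> u"
    unfolding inner3_two_slices inner3_zero_left inner3_zero_right scalar_prod_arr[OF u u] by simp
  moreover have "inner3 shape (X i) ?T = xh i \<bullet> u" for i
    unfolding inner3_X_two_slices inner3_zero_left scalar_prod_xh[OF u] by simp
  moreover have "u \<bullet> (cov_mat dim_l n xh xh *\<^sub>v u) = 1 / real n * (\<Sum>i=1..n. (xh i \<bullet> u)^2)"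
    unfolding cov_mat_bilinear_form[OF u u carrier_xh(1) carrier_xh(1)]
      comm_scalar_prod[OF u carrier_xh(1)] power2_eq_square ..
  ultimately show ?thesis using rip_two_slices[of "arr u" "\<lambda>h j k. 0"] by simp
qed

text \<open>Polarization of RIP along the two orthogonal arrays \<open>Ah \<otimes> U \<otimes> Gh\<close> and
  \<open>(c Ah - A) \<otimes> V \<otimes> Gh\<close>, whose squared norms are \<open>|u|\<^sup>2\<close> and \<open>(1 - c\<^sup>2) |v|\<^sup>2\<close>.\<close>
lemma cross_cov_bounded:
  assumes u: "u \<in> carrier_vec dim_l" and v: "v \<in> carrier_vec dim_l"
  shows "u \<bullet> ((c \<cdot>\<^sub>m cov_mat dim_l n xh xh - cov_mat dim_l n xh xa) *\<^sub>v v)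
    \<le> \<delta> * dist3 shape_A Ah A * vnorm u * vnorm v"
proof -
  define y where "y i = xh i \<bullet> u" for i
  define z where "z i = c * (xh i \<bullet> v) - xa i \<bullet> v" for i
  define T where "T t = two_slices (\<lambda>h j k. arr u h j k + (t * c) * arr v h j k) (\<lambda>h j k. (-t) * arr v h j k)"
    for t
  define b where "b = sqrt (1 - c^2) * vnorm v"
  have b2: "b^2 = (1 - c^2) * (v \<bullet> v)"
    using c_square_le_1 by (simp add: b_def power_mult_distrib vnorm_square)
  have entries: "inner3 shape (X i) (T t) = y i + t * z i" for i t
    unfolding T_def y_def z_def inner3_X_two_slices inner3_add_left inner3_scale_left
      scalar_prod_xh[OF u] scalar_prod_xh[OF v]
    by (simp add: algebra_simps)
  have norm: "inner3 shape (T t) (T t) = (vnorm u)^2 + t^2 * b^2" for t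
    unfolding T_def inner3_two_slices
    unfolding b2 vnorm_square inner3_add_left inner3_add_right
      inner3_scale_left inner3_scale_right inner3_commute[of shape_l "arr v" "arr u"]
      scalar_prod_arr[OF u u] scalar_prod_arr[OF v v] scalar_prod_arr[OF u v]
    by (simp add: algebra_simps power2_eq_square)
  have polar: "1 / real n * (\<Sum>i=1..n. y i * z i) \<le> \<delta> * vnorm u * b"
  proof (rule polarization_le)
    show "0 \<le> vnorm u" "0 \<le> b"
      unfolding b_def using c_square_le_1 vnorm_nonneg[of u] vnorm_nonneg[of v] by simp_all
    have "(1 - \<delta>) * inner3 shape (T t) (T t) \<le> empirical (T t)
        \<and> empirical (T t) \<le> (1 + \<delta>) * inner3 shape (T t) (T t)" for t
      unfolding T_def by (rule rip_two_slices)
    then show "(1 - \<delta>) * ((vnorm u)^2 + t^2 * b^2) \<le> 1 / real n * (\<Sum>i=1..n. (y i + t * z i)^2)"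
      "1 / real n * (\<Sum>i=1..n. (y i + t * z i)^2) \<le> (1 + \<delta>) * ((vnorm u)^2 + t^2 * b^2)" for t
      unfolding entries norm by auto
  qed
  have "c \<cdot>\<^sub>m cov_mat dim_l n xh xh - cov_mat dim_l n xh xa
      = cov_mat dim_l n xh (\<lambda>i. c \<cdot>\<^sub>v xh i - xa i)"
    by (rule cov_mat_smult_diff) (rule carrier_xh)+
  then have "u \<bullet> ((c \<cdot>\<^sub>m cov_mat dim_l n xh xh - cov_mat dim_l n xh xa) *\<^sub>v v)
      = 1 / real n * (\<Sum>i=1..n. (u \<bullet> xh i) * ((c \<cdot>\<^sub>v xh i - xa i) \<bullet> v))"
    using cov_mat_bilinear_form[OF u v carrier_xh(1), of "\<lambda>i. c \<cdot>\<^sub>v xh i - xa i"]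
    by (simp only: carrier_xh minus_carrier_vec smult_carrier_vec)
  also have "\<dots> = 1 / real n * (\<Sum>i=1..n. y i * z i)"
  proof -
    have "(u \<bullet> xh i) * ((c \<cdot>\<^sub>v xh i - xa i) \<bullet> v) = y i * z i" for i
      unfolding y_def z_def using carrier_xh[of i] u v
      by (simp add: comm_scalar_prod[of u] minus_scalar_prod_distrib)
    then show ?thesis by simp
  qed
  also have "\<dots> \<le> \<delta> * vnorm u * b" by (rule polar)
  also have "\<dots> = \<delta> * dist3 shape_A Ah A * vnorm u * vnorm v"
    unfolding dist3_Ah_A b_def by (simp only: mult_ac)
  finally show ?thesis .
qed

end

theorem lemma4:
  fixes L n l :: nat and d p q :: "nat \<Rightarrow> nat" and X :: "nat \<Rightarrow> arr3" and \<delta> :: real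
    and Ahf Af Ghf :: "nat \<Rightarrow> arr3"
  assumes "L \<ge> 2"
    and "\<forall>k\<in>{1..L}. d k > 0 \<and> p k > 0 \<and> q k > 0"
    and "0 < \<delta>" and "\<delta> < 1/3"
    and "RIP L d p q n X \<delta>"
    and "l \<in> {1..L}"
    and "fnorm3 (dims d p q {l<..L}) (kron_range d p q Ahf L (l+1)) = 1"
    and "fnorm3 (dims d p q {l<..L}) (kron_range d p q Af L (l+1)) = 1"
    and "fnorm3 (dims d p q {1..<l}) (kron_range d p q Ghf (l-1) 1) = 1"
  shows
    "let Ah = kron_range d p q Ahf L (l+1);
         A = kron_range d p q Af L (l+1);
         Gh = kron_range d p q Ghf (l-1) 1;
         m = d l * p l * q l;
         xh = (\<lambda>i. vec3 (d l, p l, q l) (Xtilde L d p q l (X i) Ah Gh));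
         x = (\<lambda>i. vec3 (d l, p l, q l) (Xtilde L d p q l (X i) A Gh));
         Sh = cov_mat m n xh xh;
         S = cov_mat m n xh x
     in invertible_mat Sh \<and>
        spec_norm m (mat_inv m Sh * (inner3 (dims d p q {l<..L}) Ah A \<cdot>\<^sub>m Sh - S))
          \<le> 3 * \<delta> / (1 - 3 * \<delta>) * dist3 (dims d p q {l<..L}) Ah A"
proof -
  interpret rip_mode_slice L n l d p q X \<delta> Ahf Af Ghf
    using assms by unfold_locales auto
  let ?Sh = "cov_mat dim_l n xh xh" and ?S = "cov_mat dim_l n xh xa"
  have carrier: "?Sh \<in> carrier_mat dim_l dim_l" "c \<cdot>\<^sub>m ?Sh - ?S \<in> carrier_mat dim_l dim_l"
    unfolding cov_mat_def by (rule mat_carrier, rule minus_carrier_mat, rule mat_carrier)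
  have \<delta>: "0 < 1 - \<delta>" "0 < 1 - 3 * \<delta>" using assms(3,4) by simp_all
  have dist: "0 \<le> dist3 shape_A Ah A"
    unfolding dist3_Ah_A using c_square_le_1 by simp
  have "invertible_mat ?Sh"
    by (rule mat_inv_if_coercive(1)[OF carrier(1) \<delta>(1) cov_mat_coercive])
  moreover have "spec_norm dim_l (mat_inv dim_l ?Sh * (c \<cdot>\<^sub>m ?Sh - ?S))
      \<le> \<delta> * dist3 shape_A Ah A / (1 - \<delta>)"
    using assms(3,4) dist
    by (intro spec_norm_inv_mult_le[OF carrier _ _ cov_mat_coercive cross_cov_bounded]) simp_all
  moreover have "\<delta> * dist3 shape_A Ah A / (1 - \<delta>) \<le> 3 * \<delta> / (1 - 3 * \<delta>) * dist3 shape_A Ah A"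
    using \<delta> assms(3) dist by (simp add: field_simps mult_right_mono)
  ultimately show ?thesis
    unfolding Let_def by (meson order_trans)
qed

end
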